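(* Let $E$ be a Hermite–Biehler entire function with no real zeros and let $f \in \mathcal{H}^{\infty}(E)$ be a real entire function. Suppose $\lvert f(\xi)\rvert = \lvert E(\xi)\rvert\,\lVert f/E\rVert_\infty$ for some $\xi\in\mathbb{R}$. Let $\alpha\in\mathbb{R}$ be such that $E(\xi) = e^{-i\alpha}\lvert E(\xi)\rvert$, and let $a_l$ and $a_r$ denote the simple zeros of $A_\alpha$ to the left and to the right of $\xi$, respectively. Then $$\lvert f(x)\rvert \geq \lVert f/E\rVert_\infty\, A_\alpha(x), \qquad a_l \leq x \leq a_r.$$
   Context: An entire function $E$ is Hermite–Biehler if $\lvert E(\overline{z})\rvert < \lvert E(z)\rvert$ for all $z$ in the upper half-plane $\mathbb{C}_+$. For an entire function $g$, $g^{\#}(z) = \overline{g(\overline{z})}$; $g$ is real entire if it is real on the real axis. $\mathcal{H}^{\infty}(E)$ is the set of entire functions $f$ such that $f/E$ and $f^{\#}/E$ are bounded analytic functions on $\mathbb{C}_+$, with $\lVert f/E\rVert_\infty = \sup_{x\in\mathbb{R}} \lvert f(x)/E(x)\rvert$. For $\alpha\in\mathbb{R}$, $A_\alpha = (e^{i\alpha}E + e^{-i\alpha}E^{\#})/2$ is the real part of $e^{i\alpha}E$. *)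

theory Defs
  imports "HOL-Analysis.Analysis"
begin

definition hermite_biehler :: "(complex \<Rightarrow> complex) \<Rightarrow> bool" where
  "hermite_biehler E \<longleftrightarrow> E holomorphic_on UNIV \<and>
     (\<forall>z. 0 < Im z \<longrightarrow> cmod (E (cnj z)) < cmod (E z))"

definition sharp :: "(complex \<Rightarrow> complex) \<Rightarrow> complex \<Rightarrow> complex" where
  "sharp g z = cnj (g (cnj z))"

definition real_entire :: "(complex \<Rightarrow> complex) \<Rightarrow> bool" where
  "real_entire g \<longleftrightarrow> g holomorphic_on UNIV \<and> (\<forall>x::real. g (complex_of_real x) \<in> \<real>)"

definition upper_half_plane :: "complex set" where
  "upper_half_plane = {z. 0 < Im z}"

definition H_inf :: "(complex \<Rightarrow> complex) \<Rightarrow> (complex \<Rightarrow> complex) set" where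
  "H_inf E = {f. f holomorphic_on UNIV \<and>
     (\<lambda>z. f z / E z) holomorphic_on upper_half_plane \<and>
     bounded ((\<lambda>z. f z / E z) ` upper_half_plane) \<and>
     (\<lambda>z. sharp f z / E z) holomorphic_on upper_half_plane \<and>
     bounded ((\<lambda>z. sharp f z / E z) ` upper_half_plane)}"

definition sup_norm :: "(complex \<Rightarrow> complex) \<Rightarrow> (complex \<Rightarrow> complex) \<Rightarrow> real" where
  "sup_norm f E = (SUP x::real. cmod (f (complex_of_real x) / E (complex_of_real x)))"

definition A_alpha :: "(complex \<Rightarrow> complex) \<Rightarrow> real \<Rightarrow> complex \<Rightarrow> complex" where
  "A_alpha E \<alpha> z = (exp (\<i> * complex_of_real \<alpha>) * E z + exp (- \<i> * complex_of_real \<alpha>) * sharp E z) / 2"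

end

theory Submission
  imports Defs "HOL-Complex_Analysis.Conformal_Mappings"
begin

text \<open>
  Normalise so that \<open>\<parallel>f/E\<parallel>\<^sub>\<infinity> = 1\<close> and \<open>f(\<xi>) = e\<^sup>i\<^sup>\<alpha> E(\<xi>) > 0\<close>, and replace \<open>E\<close> by \<open>e\<^sup>i\<^sup>\<alpha> E\<close>.
  By the Phragmen--Lindelof principle \<open>|f| \<le> |E|\<close> on the closed upper half-plane, so for
  \<open>|\<lambda>| > 1\<close> the function \<open>G\<^sub>\<lambda> = E - f/\<lambda>\<close> has no zeros there and, by Phragmen--Lindelof
  applied to \<open>G\<^sub>\<lambda>\<^sup>#/G\<^sub>\<lambda>\<close>, satisfies \<open>|G\<^sub>\<lambda>(z\<^sup>*)| \<le> |G\<^sub>\<lambda>(z)|\<close> for \<open>Im z > 0\<close>. Hence the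
  argument of \<open>G\<^sub>\<lambda>\<close> decreases along every real interval on which \<open>G\<^sub>\<lambda>\<close> avoids the
  negative axis, which holds where \<open>Re E > 0\<close>, i.e. between the zeros \<open>a\<^sub>l, a\<^sub>r\<close> of \<open>A\<^sub>\<alpha>\<close>.
  Now let \<open>\<lambda> = 1 + it\<close> and \<open>t \<rightarrow> 0\<close>. At \<open>\<xi>\<close>, \<open>G\<^sub>\<lambda>(\<xi>) = E(\<xi>) it/(1 + it)\<close> has argument
  tending to \<open>\<plusminus>\<pi>/2\<close>, while at \<open>x\<close> the argument tends to \<open>Arg (E(x) - f(x))\<close>. Choosing the
  sign of \<open>t\<close> according to the side of \<open>\<xi>\<close> on which \<open>x\<close> lies, monotonicity gives
  \<open>|Arg (E(x) - f(x))| \<ge> \<pi>/2\<close>, that is \<open>Re f(x) \<ge> Re E(x) = A\<^sub>\<alpha>(x)\<close>.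
\<close>

section \<open>A Phragmen--Lindelof principle for the upper half-plane\<close>

lemma norm_add_ii_ge_1:
  assumes "0 \<le> Im z"
  shows "1 \<le> cmod (z + \<i>)"
proof -
  have "1 \<le> \<bar>Im (z + \<i>)\<bar>" using assms by simp
  also have "\<dots> \<le> cmod (z + \<i>)" by (rule abs_Im_le_cmod)
  finally show ?thesis .
qed

lemma phragmen_lindelof_power_bound:
  fixes g :: "complex \<Rightarrow> complex"
  assumes holo: "g holomorphic_on {z. 0 < Im z}"
    and cont: "continuous_on {z. 0 \<le> Im z} g"
    and bounded: "\<And>z. 0 < Im z \<Longrightarrow> cmod (g z) \<le> B"
    and real_le_1: "\<And>x::real. cmod (g (of_real x)) \<le> 1"
    and z: "0 < Im z"
  shows "cmod (g z) ^ n \<le> cmod (z + \<i>)"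
proof -
  \<comment> \<open>Maximum modulus for \<open>g\<^sup>n/(z + i)\<close> on a half-disc so large that the arc contributes at most 1.\<close>
  have power_pos: "0 < max 1 B ^ n" by simp
  define R where "R = cmod z + 2 + max 1 B ^ n"
  define D where "D = {w. 0 < Im w \<and> cmod w < R}"
  define h where "h w = g w ^ n / (w + \<i>)" for w
  have norm_h: "cmod (h w) = cmod (g w) ^ n / cmod (w + \<i>)" for w
    unfolding h_def by (simp add: norm_divide norm_power)
  have closure_D: "closure D \<subseteq> {w. 0 \<le> Im w \<and> cmod w \<le> R}"
    unfolding D_def
    by (intro closure_minimal closed_Collect_conj closed_Collect_le continuous_intros) auto
  have open_D: "open D"
    unfolding D_def by (intro open_Collect_conj open_Collect_less continuous_intros)
  have nonzero: "w + \<i> \<noteq> 0" if "0 \<le> Im w" for w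
    using norm_add_ii_ge_1[OF that] by auto
  have cont_h: "continuous_on {w. 0 \<le> Im w} h"
    unfolding h_def using nonzero by (intro continuous_intros cont) auto
  have "h holomorphic_on interior D"
    unfolding h_def interior_open[OF open_D] using nonzero
    by (intro holomorphic_intros holomorphic_on_subset[OF holo]) (auto simp: D_def)
  moreover have "continuous_on (closure D) h"
    using closure_D by (intro continuous_on_subset[OF cont_h]) auto
  moreover have "bounded D"
    unfolding D_def bounded_iff by (intro exI[of _ R]) auto
  moreover have "cmod (h w) \<le> 1" if w: "w \<in> frontier D" for w
  proof -
    have "0 \<le> Im w" "cmod w \<le> R" "w \<notin> D"
      using w closure_D interior_open[OF open_D] unfolding frontier_def by auto
    then consider "Im w = 0" | "0 < Im w" "cmod w = R"
      unfolding D_def by fastforce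
    then have "cmod (g w) ^ n \<le> cmod (w + \<i>)"
    proof cases
      case 1
      then have "cmod (g w) \<le> 1" using real_le_1 by (metis complex_is_Real_iff of_real_Re)
      then have "cmod (g w) ^ n \<le> 1" by (simp add: power_le_one)
      then show ?thesis using norm_add_ii_ge_1[of w] 1 by simp
    next
      case 2
      have "cmod (g w) ^ n \<le> max 1 B ^ n"
        using bounded[OF 2(1)] by (intro power_mono) auto
      also have "\<dots> \<le> cmod w - 1" using 2(2) unfolding R_def by simp
      also have "\<dots> \<le> cmod (w + \<i>)" using norm_triangle_ineq2[of w "-\<i>"] by simp
      finally show ?thesis .
    qed
    then show ?thesis
      using norm_add_ii_ge_1[of w] \<open>0 \<le> Im w\<close> by (simp add: norm_h divide_le_eq_1)
  qed
  moreover have "z \<in> D"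
  proof -
    have "cmod z < R" unfolding R_def using power_pos by linarith
    then show ?thesis unfolding D_def using z by simp
  qed
  ultimately have "cmod (h z) \<le> 1" by (rule maximum_modulus_frontier)
  then show ?thesis using nonzero[of z] z by (simp add: norm_h divide_le_eq_1)
qed

theorem phragmen_lindelof_upper_half_plane:
  fixes g :: "complex \<Rightarrow> complex"
  assumes holo: "g holomorphic_on {z. 0 < Im z}"
    and cont: "continuous_on {z. 0 \<le> Im z} g"
    and bounded: "\<And>z. 0 < Im z \<Longrightarrow> cmod (g z) \<le> B"
    and real_le_1: "\<And>x::real. cmod (g (of_real x)) \<le> 1"
    and z: "0 \<le> Im z"
  shows "cmod (g z) \<le> 1"
proof (cases "Im z = 0")
  case True
  then show ?thesis using real_le_1 by (metis complex_is_Real_iff of_real_Re)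
next
  case False
  show ?thesis
  proof (rule ccontr)
    assume "\<not> ?thesis"
    then obtain n where "cmod (z + \<i>) < cmod (g z) ^ n"
      using real_arch_pow[of "cmod (g z)"] by force
    moreover have "cmod (g z) ^ n \<le> cmod (z + \<i>)"
      using phragmen_lindelof_power_bound[OF holo cont bounded real_le_1] False z by simp
    ultimately show False by simp
  qed
qed

section \<open>Phase of a function dominating its reflection\<close>

lemma filterlim_at_right_0_ray:
  fixes z d :: complex
  assumes "d \<noteq> 0"
  shows "filterlim (\<lambda>y::real. z + of_real y * d) (at z) (at_right 0)"
proof (rule filterlim_atI)
  have "((\<lambda>y::real. z + of_real y * d) \<longlongrightarrow> z + of_real 0 * d) (at_right 0)"
    by (intro tendsto_intros)
  then show "((\<lambda>y::real. z + of_real y * d) \<longlongrightarrow> z) (at_right 0)"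
    by simp
  show "\<forall>\<^sub>F y in at_right 0. z + of_real y * d \<noteq> z"
    using eventually_at_right_less by eventually_elim (use assms in simp)
qed

text \<open>\<open>Im (cnj G * G')\<close> is \<open>|G|\<^sup>2\<close> times the derivative of \<open>arg G\<close> along the real axis.\<close>

lemma reflection_le_imp_Im_cnj_mult_deriv_nonpos:
  fixes G :: "complex \<Rightarrow> complex" and x :: real
  assumes deriv: "(G has_field_derivative G') (at (of_real x))"
    and reflection_le: "\<And>y. 0 < y \<Longrightarrow>
      cmod (G (of_real x - of_real y * \<i>)) \<le> cmod (G (of_real x + of_real y * \<i>))"
  shows "Im (cnj (G (of_real x)) * G') \<le> 0"
proof -
  define a where "a = G (of_real x)"
  define quotient where
    "quotient d = (\<lambda>y. (G (of_real x + of_real y * d) - a) / (of_real y * d))" for d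
  have quotient_limit: "(quotient d \<longlongrightarrow> G') (at_right 0)" if "d \<noteq> 0" for d
    using filterlim_compose[OF deriv[unfolded has_field_derivative_iff]
        filterlim_at_right_0_ray[OF that]]
    by (simp add: quotient_def a_def)
  \<comment> \<open>\<open>L y = (|G(x + iy)|\<^sup>2 - |G(x - iy)|\<^sup>2) / y\<close>\<close>
  define L where "L y = 2 * Re (\<i> * cnj a * (quotient \<i> y + quotient (- \<i>) y))
    + y * ((cmod (quotient \<i> y))\<^sup>2 - (cmod (quotient (- \<i>) y))\<^sup>2)" for y
  have "(L \<longlongrightarrow> 2 * Re (\<i> * cnj a * (G' + G')) + 0 * ((cmod G')\<^sup>2 - (cmod G')\<^sup>2)) (at_right 0)"
    unfolding L_def by (intro tendsto_intros quotient_limit) simp_all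
  then have L_limit: "(L \<longlongrightarrow> - 4 * Im (cnj a * G')) (at_right 0)"
    by (simp add: algebra_simps)
  have "\<forall>\<^sub>F y in at_right 0. 0 \<le> L y"
    using eventually_at_right_less
  proof eventually_elim
    case (elim y)
    have plus: "G (of_real x + of_real y * \<i>) = a + of_real y * \<i> * quotient \<i> y"
      using elim by (simp add: quotient_def)
    have minus: "G (of_real x - of_real y * \<i>) = a - of_real y * \<i> * quotient (- \<i>) y"
      using elim by (simp add: quotient_def)
    have "cmod (a - of_real y * \<i> * quotient (- \<i>) y) \<le> cmod (a + of_real y * \<i> * quotient \<i> y)"
      using reflection_le[OF elim] unfolding plus minus .
    then have "(cmod (a - of_real y * \<i> * quotient (- \<i>) y))\<^sup>2
        \<le> (cmod (a + of_real y * \<i> * quotient \<i> y))\<^sup>2"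
      by (simp add: power_mono)
    also have "(cmod (a + of_real y * \<i> * quotient \<i> y))\<^sup>2
        = (cmod (a - of_real y * \<i> * quotient (- \<i>) y))\<^sup>2 + y * L y"
      unfolding L_def by (simp only: cmod_power2) (simp add: algebra_simps power2_eq_square)
    finally show ?case using elim by (simp add: zero_le_mult_iff)
  qed
  then have "0 \<le> - 4 * Im (cnj a * G')"
    by (rule tendsto_lowerbound[OF L_limit]) simp
  then show ?thesis unfolding a_def by simp
qed

lemma has_real_derivative_Im_of_real:
  assumes "(F has_field_derivative D) (at (of_real x))"
  shows "((\<lambda>t. Im (F (of_real t))) has_real_derivative Im D) (at x)"
proof -
  have "((\<lambda>t. F (of_real t)) has_vector_derivative D) (at x)"
    using has_vector_derivative_real_field[OF assms] by simp
  then have "((\<lambda>t. Im (F (of_real t))) has_derivative (\<lambda>h. Im (h *\<^sub>R D))) (at x)"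
    unfolding has_vector_derivative_def by (rule has_derivative_Im)
  then show ?thesis
    by (simp add: has_field_derivative_def mult.commute[of _ "Im D"])
qed

lemma reflection_le_imp_Arg_antimono:
  fixes G :: "complex \<Rightarrow> complex" and x1 x2 :: real
  assumes holo: "G holomorphic_on UNIV" and "x1 \<le> x2"
    and not_nonpos: "\<And>x. x1 \<le> x \<Longrightarrow> x \<le> x2 \<Longrightarrow> G (of_real x) \<notin> \<real>\<^sub>\<le>\<^sub>0"
    and reflection_le: "\<And>z. 0 < Im z \<Longrightarrow> cmod (G (cnj z)) \<le> cmod (G z)"
  shows "Arg (G (of_real x2)) \<le> Arg (G (of_real x1))"
proof -
  have "Im (Ln (G (of_real x2))) \<le> Im (Ln (G (of_real x1)))"
  proof (rule DERIV_nonpos_imp_nonincreasing[OF \<open>x1 \<le> x2\<close>])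
    fix x assume x: "x1 \<le> x" "x \<le> x2"
    define z where "z = complex_of_real x"
    have "G z \<notin> \<real>\<^sub>\<le>\<^sub>0" using not_nonpos x unfolding z_def by simp
    have deriv_G: "(G has_field_derivative deriv G z) (at z)"
      using holo by (simp add: holomorphic_derivI)
    have "((\<lambda>w. Ln (G w)) has_field_derivative deriv G z / G z) (at z)"
      using DERIV_chain2[OF has_field_derivative_Ln[OF \<open>G z \<notin> \<real>\<^sub>\<le>\<^sub>0\<close>] deriv_G]
      by (simp add: field_simps)
    then have "((\<lambda>t. Im (Ln (G (of_real t)))) has_real_derivative Im (deriv G z / G z)) (at x)"
      unfolding z_def by (rule has_real_derivative_Im_of_real)
    moreover have "Im (deriv G z / G z) \<le> 0"
    proof -
      have "Im (cnj (G z) * deriv G z) \<le> 0"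
        unfolding z_def
      proof (rule reflection_le_imp_Im_cnj_mult_deriv_nonpos)
        show "(G has_field_derivative deriv G (of_real x)) (at (of_real x))"
          using deriv_G unfolding z_def .
        show "cmod (G (of_real x - of_real y * \<i>)) \<le> cmod (G (of_real x + of_real y * \<i>))"
          if "0 < y" for y
          using reflection_le[of "of_real x + of_real y * \<i>"] that by simp
      qed
      moreover have "deriv G z / G z = cnj (G z) * deriv G z / of_real ((cmod (G z))\<^sup>2)"
        using \<open>G z \<notin> \<real>\<^sub>\<le>\<^sub>0\<close> unfolding complex_norm_square by auto
      ultimately show ?thesis
        by (simp add: Im_divide_of_real divide_nonpos_nonneg)
    qed
    ultimately show "\<exists>y. ((\<lambda>t. Im (Ln (G (of_real t)))) has_real_derivative y) (at x) \<and> y \<le> 0"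
      by blast
  qed
  moreover have "G (of_real x1) \<noteq> 0" "G (of_real x2) \<noteq> 0"
    using not_nonpos[of x1] not_nonpos[of x2] \<open>x1 \<le> x2\<close> by auto
  ultimately show ?thesis by (simp add: Arg_eq_Im_Ln)
qed

lemma norm_one_plus_ii_gt_1:
  "t \<noteq> 0 \<Longrightarrow> 1 < cmod (1 + \<i> * of_real t)"
  by (simp add: cmod_def)

lemma one_minus_inverse_one_plus_ii:
  "1 - 1 / (1 + \<i> * of_real t) = of_real t * (\<i> / (1 + \<i> * of_real t))"
proof -
  have "1 + \<i> * of_real t \<noteq> 0" by (simp add: complex_eq_iff)
  then show ?thesis by (simp add: field_simps)
qed

lemma tendsto_Arg_one_minus_inverse:
  shows "((\<lambda>t. Arg (1 - 1 / (1 + \<i> * of_real t))) \<longlongrightarrow> pi / 2) (at_right 0)"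
    and "((\<lambda>t. Arg (1 - 1 / (1 + \<i> * of_real t))) \<longlongrightarrow> - pi / 2) (at_left 0)"
proof -
  have "((\<lambda>t. Arg (\<i> / (1 + \<i> * of_real t))) \<longlongrightarrow> Arg (\<i> / (1 + \<i> * of_real 0))) (at_right 0)"
    by (intro tendsto_intros) (auto simp: complex_nonpos_Reals_iff)
  moreover have "\<forall>\<^sub>F t in at_right 0. Arg (\<i> / (1 + \<i> * of_real t)) = Arg (1 - 1 / (1 + \<i> * of_real t))"
    using eventually_at_right_less
    by eventually_elim (metis Arg_times_of_real one_minus_inverse_one_plus_ii)
  ultimately show "((\<lambda>t. Arg (1 - 1 / (1 + \<i> * of_real t))) \<longlongrightarrow> pi / 2) (at_right 0)"
    by (simp add: tendsto_cong)
  have "((\<lambda>t. Arg (- \<i> / (1 + \<i> * of_real t))) \<longlongrightarrow> Arg (- \<i> / (1 + \<i> * of_real 0))) (at_left 0)"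
    by (intro tendsto_intros) (auto simp: complex_nonpos_Reals_iff)
  moreover have "\<forall>\<^sub>F t in at_left 0. t < (0::real)"
    by (simp add: eventually_at_filter)
  then have "\<forall>\<^sub>F t in at_left 0. Arg (- \<i> / (1 + \<i> * of_real t)) = Arg (1 - 1 / (1 + \<i> * of_real t))"
  proof eventually_elim
    case (elim t)
    have "1 - 1 / (1 + \<i> * of_real t) = of_real (- t) * (- \<i> / (1 + \<i> * of_real t))"
      by (simp add: one_minus_inverse_one_plus_ii)
    then show ?case using elim by (metis Arg_times_of_real neg_0_less_iff_less)
  qed
  ultimately show "((\<lambda>t. Arg (1 - 1 / (1 + \<i> * of_real t))) \<longlongrightarrow> - pi / 2) (at_left 0)"
    by (simp add: tendsto_cong)
qed

section \<open>Hermite--Biehler functions and \<open>H\<^sup>\<infinity>(E)\<close>\<close>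

lemma norm_sharp [simp]: "cmod (sharp g z) = cmod (g (cnj z))"
  by (simp add: sharp_def)

lemma sharp_holomorphic:
  assumes "g holomorphic_on UNIV"
  shows "sharp g holomorphic_on UNIV"
proof -
  have "(cnj \<circ> g \<circ> cnj) field_differentiable at z" for z
    using assms by (intro field_differentiable_cnj_cnj) (simp add: holomorphic_on_imp_differentiable_at)
  moreover have "sharp g = cnj \<circ> g \<circ> cnj"
    by (simp add: fun_eq_iff sharp_def)
  ultimately show ?thesis
    by (simp add: holomorphic_on_def field_differentiable_at_within)
qed

lemma hermite_biehler_nonzero:
  assumes "hermite_biehler E" "0 < Im z"
  shows "E z \<noteq> 0"
  using assms unfolding hermite_biehler_def by force

lemma hermite_biehler_mult:
  assumes "hermite_biehler E" "c \<noteq> 0"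
  shows "hermite_biehler (\<lambda>z. c * E z)"
  using assms unfolding hermite_biehler_def by (auto intro: holomorphic_intros simp: norm_mult)

lemma bounded_image_mult:
  "bounded (h ` S) \<Longrightarrow> bounded ((\<lambda>z. c * h z) ` S)" for c :: complex
  using bounded_linear_image[OF _ bounded_linear_mult_right[of c], of "h ` S"]
  by (simp add: image_image)

lemma H_inf_mult:
  assumes "f \<in> H_inf E"
  shows "(\<lambda>z. a * f z) \<in> H_inf (\<lambda>z. c * E z)"
proof -
  have quotient: "(\<lambda>z. a * f z / (c * E z)) = (\<lambda>z. a / c * (f z / E z))"
    and sharp_quotient: "(\<lambda>z. sharp (\<lambda>z. a * f z) z / (c * E z)) = (\<lambda>z. cnj a / c * (sharp f z / E z))"
    by (auto simp: fun_eq_iff sharp_def)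
  have "f holomorphic_on UNIV"
    "(\<lambda>z. f z / E z) holomorphic_on upper_half_plane" "bounded ((\<lambda>z. f z / E z) ` upper_half_plane)"
    "(\<lambda>z. sharp f z / E z) holomorphic_on upper_half_plane"
    "bounded ((\<lambda>z. sharp f z / E z) ` upper_half_plane)"
    using assms unfolding H_inf_def by auto
  then show ?thesis
    unfolding H_inf_def mem_Collect_eq quotient sharp_quotient
    by (intro conjI holomorphic_on_mult[OF holomorphic_on_const] bounded_image_mult)
qed

lemma H_inf_growth:
  assumes "hermite_biehler E" "f \<in> H_inf E"
  obtains B where "\<And>z. 0 < Im z \<Longrightarrow> cmod (f z) \<le> B * cmod (E z)"
    and "\<And>z. 0 < Im z \<Longrightarrow> cmod (f (cnj z)) \<le> B * cmod (E z)"
proof -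
  obtain B1 B2
    where B1: "\<And>z. 0 < Im z \<Longrightarrow> cmod (f z / E z) \<le> B1"
      and B2: "\<And>z. 0 < Im z \<Longrightarrow> cmod (sharp f z / E z) \<le> B2"
    using assms(2) unfolding H_inf_def bounded_iff upper_half_plane_def by auto
  show ?thesis
  proof (rule that[of "max B1 B2"])
    fix z :: complex assume z: "0 < Im z"
    have E_pos: "0 < cmod (E z)"
      using hermite_biehler_nonzero[OF assms(1) z] by simp
    show "cmod (f z) \<le> max B1 B2 * cmod (E z)"
      using max.coboundedI1[OF B1[OF z]] E_pos by (simp add: norm_divide pos_divide_le_eq)
    show "cmod (f (cnj z)) \<le> max B1 B2 * cmod (E z)"
      using max.coboundedI2[OF B2[OF z]] E_pos by (simp add: norm_divide pos_divide_le_eq)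
  qed
qed

lemma norm_le_sup_norm:
  assumes "hermite_biehler E" "\<And>x::real. E (of_real x) \<noteq> 0" "f \<in> H_inf E"
  shows "cmod (f (of_real x)) \<le> sup_norm f E * cmod (E (of_real x))"
proof -
  obtain B where B: "\<And>z. 0 < Im z \<Longrightarrow> cmod (f z / E z) \<le> B"
    using assms(3) unfolding H_inf_def bounded_iff upper_half_plane_def by auto
  \<comment> \<open>The supremum is finite: on the real line \<open>f/E\<close> is a boundary value of a bounded function.\<close>
  have "cmod (f (of_real y) / E (of_real y)) \<le> B" for y :: real
  proof (rule tendsto_upperbound)
    have "continuous_on UNIV f" "continuous_on UNIV E"
      using assms unfolding hermite_biehler_def H_inf_def
      by (auto intro: holomorphic_on_imp_continuous_on)
    then have "isCont (\<lambda>z. f z / E z) (of_real y)"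
      using assms(2) by (intro continuous_intros) (auto simp: continuous_on_eq_continuous_at)
    then have "((\<lambda>t. f (of_real y + of_real t * \<i>) / E (of_real y + of_real t * \<i>))
        \<longlongrightarrow> f (of_real y) / E (of_real y)) (at_right 0)"
      unfolding isCont_def by (rule filterlim_compose[OF _ filterlim_at_right_0_ray]) simp
    then show "((\<lambda>t. cmod (f (of_real y + of_real t * \<i>) / E (of_real y + of_real t * \<i>)))
        \<longlongrightarrow> cmod (f (of_real y) / E (of_real y))) (at_right 0)"
      by (rule tendsto_norm)
    show "\<forall>\<^sub>F t in at_right 0. cmod (f (of_real y + of_real t * \<i>) / E (of_real y + of_real t * \<i>)) \<le> B"
      using eventually_at_right_less by eventually_elim (simp add: B)
  qed simp
  then have "cmod (f (of_real x) / E (of_real x)) \<le> sup_norm f E"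
    unfolding sup_norm_def by (intro cSUP_upper bdd_aboveI2) auto
  then show ?thesis
    using assms(2)[of x] by (simp add: norm_divide divide_le_eq)
qed

section \<open>Functions in the unit ball of \<open>H\<^sup>\<infinity>(E)\<close>\<close>

locale H_inf_unit_ball =
  fixes E f :: "complex \<Rightarrow> complex"
  assumes hermite_biehler: "hermite_biehler E"
    and E_real_nonzero: "\<And>x::real. E (of_real x) \<noteq> 0"
    and f_H_inf: "f \<in> H_inf E"
    and f_le_E_real: "\<And>x::real. cmod (f (of_real x)) \<le> cmod (E (of_real x))"
begin

lemma E_holomorphic: "E holomorphic_on UNIV"
  using hermite_biehler unfolding hermite_biehler_def by simp

lemma f_holomorphic: "f holomorphic_on UNIV"
  using f_H_inf unfolding H_inf_def by simp

lemma E_reflection_less: "0 < Im z \<Longrightarrow> cmod (E (cnj z)) < cmod (E z)"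
  using hermite_biehler unfolding hermite_biehler_def by simp

lemma E_nonzero: "0 \<le> Im z \<Longrightarrow> E z \<noteq> 0"
  using E_real_nonzero[of "Re z"] hermite_biehler_nonzero[OF hermite_biehler, of z]
  by (metis complex_is_Real_iff of_real_Re order_le_less)

lemma norm_f_le_norm_E:
  assumes "0 \<le> Im z"
  shows "cmod (f z) \<le> cmod (E z)"
proof -
  obtain B where B: "\<And>z. 0 < Im z \<Longrightarrow> cmod (f z) \<le> B * cmod (E z)"
    using H_inf_growth[OF hermite_biehler f_H_inf] by blast
  have "cmod (f z / E z) \<le> 1"
  proof (rule phragmen_lindelof_upper_half_plane[where g = "\<lambda>z. f z / E z" and B = B])
    show "(\<lambda>z. f z / E z) holomorphic_on {z. 0 < Im z}"
      using E_nonzero by (intro holomorphic_intros holomorphic_on_subset[OF f_holomorphic]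
          holomorphic_on_subset[OF E_holomorphic]) auto
    show "continuous_on {z. 0 \<le> Im z} (\<lambda>z. f z / E z)"
      using E_nonzero by (intro continuous_intros holomorphic_on_imp_continuous_on
          holomorphic_on_subset[OF f_holomorphic] holomorphic_on_subset[OF E_holomorphic]) auto
    show "cmod (f z / E z) \<le> B" if "0 < Im z" for z
      using B[OF that] E_nonzero[of z] that by (simp add: norm_divide divide_le_eq)
    show "cmod (f (of_real x) / E (of_real x)) \<le> 1" for x
      using f_le_E_real[of x] E_real_nonzero[of x] by (simp add: norm_divide divide_le_eq)
  qed (fact assms)
  then show ?thesis
    using E_nonzero[OF assms] by (simp add: norm_divide divide_le_eq)
qed

definition perturbed :: "complex \<Rightarrow> complex \<Rightarrow> complex"
  where "perturbed l z = E z - f z / l"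

lemma perturbed_holomorphic: "perturbed l holomorphic_on UNIV"
  unfolding perturbed_def divide_inverse
  by (intro holomorphic_intros E_holomorphic f_holomorphic)

lemma norm_perturbed_ge:
  assumes "0 \<le> Im z"
  shows "(1 - 1 / cmod l) * cmod (E z) \<le> cmod (perturbed l z)"
proof -
  have "cmod (f z / l) \<le> cmod (E z) / cmod l"
    using norm_f_le_norm_E[OF assms] by (simp add: norm_divide divide_right_mono)
  moreover have "cmod (E z) - cmod (f z / l) \<le> cmod (perturbed l z)"
    unfolding perturbed_def by (rule norm_triangle_ineq2)
  ultimately show ?thesis by (simp add: algebra_simps)
qed

lemma perturbed_nonzero:
  assumes "1 < cmod l" "0 \<le> Im z"
  shows "perturbed l z \<noteq> 0"
proof -
  have "0 < (1 - 1 / cmod l) * cmod (E z)"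
    using assms E_nonzero[OF assms(2)] by (simp add: divide_less_eq_1)
  then show ?thesis using norm_perturbed_ge[OF assms(2), of l] by auto
qed

lemma perturbed_reflection_le:
  assumes l: "1 < cmod l" and z: "0 < Im z"
  shows "cmod (perturbed l (cnj z)) \<le> cmod (perturbed l z)"
proof -
  obtain B where B: "\<And>w. 0 < Im w \<Longrightarrow> cmod (f (cnj w)) \<le> B * cmod (E w)"
    using H_inf_growth[OF hermite_biehler f_H_inf] by blast
  define k where "k = 1 - 1 / cmod l"
  define C where "C = 1 + B / cmod l"
  have k: "0 < k" using l by (simp add: k_def divide_less_eq_1)
  define g where "g w = sharp (perturbed l) w / perturbed l w" for w
  have "cmod (g z) \<le> 1"
  proof (rule phragmen_lindelof_upper_half_plane[where g = g and B = "C / k"])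
    have holo: "g holomorphic_on {w. perturbed l w \<noteq> 0}"
      unfolding g_def
      by (intro holomorphic_intros holomorphic_on_subset[OF sharp_holomorphic[OF perturbed_holomorphic]]
          holomorphic_on_subset[OF perturbed_holomorphic]) auto
    have closed_half_plane: "{w. 0 \<le> Im w} \<subseteq> {w. perturbed l w \<noteq> 0}"
      using perturbed_nonzero[OF l] by auto
    show "g holomorphic_on {w. 0 < Im w}"
      using perturbed_nonzero[OF l] by (intro holomorphic_on_subset[OF holo]) (auto simp: subset_eq)
    show "continuous_on {w. 0 \<le> Im w} g"
      using closed_half_plane by (intro continuous_on_subset[OF holomorphic_on_imp_continuous_on[OF holo]])
    show "cmod (g w) \<le> C / k" if w: "0 < Im w" for w
    proof -
      have E_pos: "0 < cmod (E w)" using E_nonzero[of w] w by simp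
      have "cmod (sharp (perturbed l) w) \<le> cmod (E (cnj w)) + cmod (f (cnj w)) / cmod l"
        using norm_triangle_ineq4[of "E (cnj w)" "f (cnj w) / l"]
        by (simp add: perturbed_def norm_divide)
      also have "\<dots> \<le> cmod (E w) + B * cmod (E w) / cmod l"
        using E_reflection_less[OF w] B[OF w] l by (intro add_mono divide_right_mono) auto
      also have "\<dots> = C * cmod (E w)" by (simp add: C_def algebra_simps)
      finally have sharp_le: "cmod (sharp (perturbed l) w) \<le> C * cmod (E w)" .
      then have "0 \<le> C * cmod (E w)" by (rule order_trans[OF norm_ge_zero])
      then have "0 \<le> C" using E_pos by (simp add: zero_le_mult_iff)
      moreover have "k * cmod (E w) \<le> cmod (perturbed l w)"
        using norm_perturbed_ge[of w l] w by (simp add: k_def)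
      ultimately have "C * cmod (E w) \<le> C / k * cmod (perturbed l w)"
        using k by (simp add: field_simps mult_left_mono)
      then show ?thesis
        using sharp_le perturbed_nonzero[OF l, of w] w by (simp add: g_def norm_divide divide_le_eq)
    qed
    show "cmod (g (of_real x)) \<le> 1" for x
      by (simp add: g_def norm_divide divide_le_eq_1)
  qed (use z in simp)
  then show ?thesis
    using perturbed_nonzero[OF l, of z] z by (simp add: g_def norm_divide divide_le_eq_1)
qed

lemma perturbed_not_nonpos_Real:
  assumes l: "1 < cmod l" and Re_E_pos: "0 < Re (E (of_real x))"
  shows "perturbed l (of_real x) \<notin> \<real>\<^sub>\<le>\<^sub>0"
proof
  assume nonpos: "perturbed l (of_real x) \<in> \<real>\<^sub>\<le>\<^sub>0"
  define u where "u = E (of_real x)"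
  have u_pos: "0 < cmod u" using Re_E_pos u_def by auto
  have "Re (f (of_real x) * cnj u / l) \<le> cmod (f (of_real x)) * cmod u / cmod l"
    using complex_Re_le_cmod[of "f (of_real x) * cnj u / l"] by (simp add: norm_mult norm_divide)
  also have "\<dots> \<le> cmod u * cmod u / cmod l"
    using f_le_E_real[of x] l by (simp add: u_def divide_right_mono mult_right_mono)
  also have "\<dots> < (cmod u)\<^sup>2"
    using u_pos l by (simp add: power2_eq_square divide_less_eq)
  also have "(cmod u)\<^sup>2 = Re (u * cnj u)" by (simp only: cmod_power2) (simp add: power2_eq_square)
  finally have "0 < Re (perturbed l (of_real x) * cnj u)"
    by (simp add: perturbed_def u_def left_diff_distrib)
  moreover have "Re (perturbed l (of_real x) * cnj u) \<le> 0"
    using nonpos Re_E_pos by (auto simp: complex_nonpos_Reals_iff u_def mult_nonpos_nonneg)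
  ultimately show False by simp
qed

lemma Arg_perturbed_antimono:
  assumes "1 < cmod l" "x1 \<le> x2" "\<And>x. x1 \<le> x \<Longrightarrow> x \<le> x2 \<Longrightarrow> 0 < Re (E (of_real x))"
  shows "Arg (perturbed l (of_real x2)) \<le> Arg (perturbed l (of_real x1))"
  using assms perturbed_not_nonpos_Real perturbed_reflection_le
  by (intro reflection_le_imp_Arg_antimono[OF perturbed_holomorphic]) auto


lemma tendsto_Arg_perturbed:
  assumes "0 < Re (E (of_real x) - f (of_real x))"
  shows "((\<lambda>t. Arg (perturbed (1 + \<i> * of_real t) (of_real x)))
          \<longlongrightarrow> Arg (E (of_real x) - f (of_real x))) (at 0 within S)"
proof -
  have "((\<lambda>t. perturbed (1 + \<i> * of_real t) (of_real x))
      \<longlongrightarrow> E (of_real x) - f (of_real x) / (1 + \<i> * of_real 0)) (at 0 within S)"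
    unfolding perturbed_def by (intro tendsto_intros) auto
  then show ?thesis
    using assms by (intro tendsto_Arg) (auto simp: complex_nonpos_Reals_iff)
qed

lemma Arg_perturbed_at_contact:
  assumes "f (of_real \<xi>) = E (of_real \<xi>)" "E (of_real \<xi>) \<in> \<real>" "0 < Re (E (of_real \<xi>))"
  shows "Arg (perturbed l (of_real \<xi>)) = Arg (1 - 1 / l)"
proof -
  have "perturbed l (of_real \<xi>) = of_real (Re (E (of_real \<xi>))) * (1 - 1 / l)"
    using assms(1,2) unfolding perturbed_def by (simp add: of_real_Re algebra_simps)
  then show ?thesis using assms(3) by simp
qed

theorem Re_E_le_Re_f:
  assumes contact: "f (of_real \<xi>) = E (of_real \<xi>)" "E (of_real \<xi>) \<in> \<real>"
    and Re_E_pos: "\<And>t. a < t \<Longrightarrow> t < b \<Longrightarrow> 0 < Re (E (of_real t))"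
    and "a < \<xi>" "\<xi> < b" "a < x" "x < b"
  shows "Re (E (of_real x)) \<le> Re (f (of_real x))"
proof (rule ccontr)
  define w where "w = E (of_real x) - f (of_real x)"
  define P where "P t y = perturbed (1 + \<i> * of_real t) (of_real y)" for t y
  assume less: "\<not> ?thesis"
  then have "0 < Re w" by (simp add: w_def)
  then have Arg_w: "\<bar>Arg w\<bar> < pi / 2" using Arg_Re_pos by blast
  have Arg_P_x: "((\<lambda>t. Arg (P t x)) \<longlongrightarrow> Arg w) (at 0 within S)" for S
    unfolding P_def w_def using \<open>0 < Re w\<close> w_def by (intro tendsto_Arg_perturbed) simp
  have Arg_P_\<xi>: "Arg (P t \<xi>) = Arg (1 - 1 / (1 + \<i> * of_real t))" for t
    unfolding P_def using contact Re_E_pos assms by (intro Arg_perturbed_at_contact) auto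
  have Arg_P_antimono: "Arg (P t y2) \<le> Arg (P t y1)" if "t \<noteq> 0" "a < y1" "y1 \<le> y2" "y2 < b" for t y1 y2
    unfolding P_def using that Re_E_pos
    by (intro Arg_perturbed_antimono norm_one_plus_ii_gt_1) auto
  consider "\<xi> < x" | "x < \<xi>" | "x = \<xi>" by linarith
  then show False
  proof cases
    case 1
    have "\<forall>\<^sub>F t in at_left 0. t < (0::real)"
      by (simp add: eventually_at_filter)
    then have "\<forall>\<^sub>F t in at_left 0. Arg (P t x) \<le> Arg (1 - 1 / (1 + \<i> * of_real t))"
      by eventually_elim (use 1 assms in \<open>auto simp flip: Arg_P_\<xi> intro!: Arg_P_antimono\<close>)
    then have "Arg w \<le> - pi / 2"
      using tendsto_le[OF _ tendsto_Arg_one_minus_inverse(2) Arg_P_x] by simp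
    then show False using Arg_w by linarith
  next
    case 2
    have "\<forall>\<^sub>F t in at_right 0. Arg (1 - 1 / (1 + \<i> * of_real t)) \<le> Arg (P t x)"
      using eventually_at_right_less
      by eventually_elim (use 2 assms in \<open>auto simp flip: Arg_P_\<xi> intro!: Arg_P_antimono\<close>)
    then have "pi / 2 \<le> Arg w"
      using tendsto_le[OF _ Arg_P_x tendsto_Arg_one_minus_inverse(1)] by simp
    then show False using Arg_w by linarith
  next
    case 3
    then show False using less contact by simp
  qed
qed

end

lemma pos_on_interval_if_nonzero:
  fixes p :: "real \<Rightarrow> real"
  assumes "continuous_on {a<..<b} p" "\<And>t. a < t \<Longrightarrow> t < b \<Longrightarrow> p t \<noteq> 0"
    and "a < \<xi>" "\<xi> < b" "0 < p \<xi>" "a < x" "x < b"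
  shows "0 < p x"
proof (rule ccontr)
  assume "\<not> 0 < p x"
  moreover have "connected (p ` {a<..<b})"
    using assms(1) by (rule connected_continuous_image) simp
  moreover have "p x \<in> p ` {a<..<b}" "p \<xi> \<in> p ` {a<..<b}"
    using assms(3-7) by auto
  ultimately have "0 \<in> p ` {a<..<b}"
    using assms(5) unfolding connected_iff_interval by force
  then show False using assms(2) by auto
qed

lemma A_alpha_of_real:
  "A_alpha E \<alpha> (of_real x) = of_real (Re (exp (\<i> * of_real \<alpha>) * E (of_real x)))"
proof -
  define w where "w = exp (\<i> * of_real \<alpha>) * E (of_real x)"
  have "exp (- \<i> * of_real \<alpha>) * sharp E (of_real x) = cnj w"
    unfolding sharp_def w_def by (simp add: exp_cnj)
  then have "A_alpha E \<alpha> (of_real x) = (w + cnj w) / 2"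
    unfolding A_alpha_def w_def by simp
  also have "\<dots> = of_real (Re w)" by (simp add: complex_add_cnj)
  finally show ?thesis unfolding w_def .
qed

lemma sup_norm_mult_Re_le_norm:
  assumes hb: "hermite_biehler E" and E_real_nonzero: "\<And>x::real. E (of_real x) \<noteq> 0"
    and f: "f \<in> H_inf E" "f (of_real \<xi>) \<in> \<real>"
    and extremal: "cmod (f (of_real \<xi>)) = cmod (E (of_real \<xi>)) * sup_norm f E"
    and phase: "c * E (of_real \<xi>) = of_real (cmod (E (of_real \<xi>)))"
    and Re_pos: "\<And>t. a < t \<Longrightarrow> t < b \<Longrightarrow> 0 < Re (c * E (of_real t))"
    and "a < \<xi>" "\<xi> < b" "a < x" "x < b"
  shows "sup_norm f E * Re (c * E (of_real x)) \<le> cmod (f (of_real x))"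
proof (cases "sup_norm f E = 0")
  case False
  define M where "M = sup_norm f E"
  \<comment> \<open>Scaling \<open>f\<close> by \<open>s/M\<close> and \<open>E\<close> by \<open>c\<close> makes the two functions touch at \<open>\<xi>\<close>.\<close>
  define s where "s = sgn (Re (f (of_real \<xi>)))"
  have M_pos: "0 < M"
    using False extremal E_real_nonzero[of \<xi>] norm_ge_zero[of "f (of_real \<xi>)"]
    by (simp add: M_def zero_le_mult_iff)
  have "cmod c = 1"
    using arg_cong[OF phase, of cmod] E_real_nonzero[of \<xi>] by (simp add: norm_mult)
  then have "c \<noteq> 0" by auto
  have norm_scaled_f: "cmod (of_real (s / M) * f (of_real y)) \<le> cmod (f (of_real y)) / M" for y
  proof -
    have "cmod (of_real (s / M) * f (of_real y)) = \<bar>s\<bar> * (cmod (f (of_real y)) / M)"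
      using M_pos by (simp only: norm_mult norm_of_real) simp
    moreover have "\<bar>s\<bar> \<le> 1" by (simp add: s_def sgn_real_def)
    ultimately show ?thesis
      using M_pos by (metis divide_nonneg_pos mult_left_le_one_le norm_ge_zero abs_ge_zero)
  qed
  interpret H_inf_unit_ball "\<lambda>z. c * E z" "\<lambda>z. of_real (s / M) * f z"
  proof
    show "hermite_biehler (\<lambda>z. c * E z)" using hb \<open>c \<noteq> 0\<close> by (rule hermite_biehler_mult)
    show "c * E (of_real x) \<noteq> 0" for x using E_real_nonzero \<open>c \<noteq> 0\<close> by simp
    show "(\<lambda>z. of_real (s / M) * f z) \<in> H_inf (\<lambda>z. c * E z)" using f(1) by (rule H_inf_mult)
    show "cmod (of_real (s / M) * f (of_real x)) \<le> cmod (c * E (of_real x))" for x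
    proof -
      have "cmod (f (of_real x)) / M \<le> cmod (E (of_real x))"
        using norm_le_sup_norm[OF hb E_real_nonzero f(1), of x] M_pos
        by (simp add: M_def pos_divide_le_eq mult.commute)
      then show ?thesis
        using order_trans[OF norm_scaled_f] \<open>cmod c = 1\<close> by (simp add: norm_mult)
    qed
  qed
  have "Re (c * E (of_real x)) \<le> Re (of_real (s / M) * f (of_real x))"
  proof (rule Re_E_le_Re_f)
    have "s * Re (f (of_real \<xi>)) = \<bar>Re (f (of_real \<xi>))\<bar>"
      unfolding s_def by (simp add: sgn_real_def)
    also have "\<dots> = M * cmod (E (of_real \<xi>))"
      using extremal in_Reals_norm[OF f(2)] by (simp add: M_def mult.commute)
    finally have "of_real (s / M) * of_real (Re (f (of_real \<xi>))) = c * E (of_real \<xi>)"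
      using M_pos phase by (simp flip: of_real_mult of_real_divide)
    then show "of_real (s / M) * f (of_real \<xi>) = c * E (of_real \<xi>)"
      using f(2) by (simp add: of_real_Re)
  qed (use phase Re_pos assms in auto)
  also have "\<dots> \<le> cmod (f (of_real x)) / M"
    using complex_Re_le_cmod order_trans norm_scaled_f by blast
  finally show ?thesis using M_pos by (simp add: M_def field_simps)
qed simp

theorem corollary2:
  fixes E f :: "complex \<Rightarrow> complex" and \<xi> \<alpha> a_l a_r :: real
  assumes "hermite_biehler E"
    and "\<forall>x::real. E (complex_of_real x) \<noteq> 0"
    and "f \<in> H_inf E"
    and "real_entire f"
    and "cmod (f (complex_of_real \<xi>)) = cmod (E (complex_of_real \<xi>)) * sup_norm f E"
    and "E (complex_of_real \<xi>) = exp (- \<i> * complex_of_real \<alpha>) * complex_of_real (cmod (E (complex_of_real \<xi>)))"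
    and "a_l < \<xi>" and "\<xi> < a_r"
    and "A_alpha E \<alpha> (complex_of_real a_l) = 0"
    and "A_alpha E \<alpha> (complex_of_real a_r) = 0"
    and "\<forall>t. a_l < t \<and> t < a_r \<longrightarrow> A_alpha E \<alpha> (complex_of_real t) \<noteq> 0"
  shows "\<forall>x. a_l \<le> x \<and> x \<le> a_r \<longrightarrow>
           cmod (f (complex_of_real x)) \<ge> sup_norm f E * Re (A_alpha E \<alpha> (complex_of_real x))"
proof (intro allI impI)
  fix x assume x: "a_l \<le> x \<and> x \<le> a_r"
  define c where "c = exp (\<i> * complex_of_real \<alpha>)"
  have A_alpha_eq: "A_alpha E \<alpha> (of_real t) = of_real (Re (c * E (of_real t)))" for t
    unfolding c_def by (rule A_alpha_of_real)
  consider "x = a_l \<or> x = a_r" | "a_l < x" "x < a_r" using x by linarith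
  then show "sup_norm f E * Re (A_alpha E \<alpha> (of_real x)) \<le> cmod (f (of_real x))"
  proof cases
    case 1
    then show ?thesis using assms(9,10) by auto
  next
    case 2
    have phase: "c * E (of_real \<xi>) = of_real (cmod (E (of_real \<xi>)))"
      unfolding c_def by (subst assms(6)) (simp add: exp_minus field_simps)
    have "continuous_on UNIV E"
      using assms(1) holomorphic_on_imp_continuous_on unfolding hermite_biehler_def by blast
    then have "continuous_on {a_l<..<a_r} (\<lambda>t. E (of_real t))"
      by (rule continuous_on_compose2) (auto intro: continuous_intros)
    then have continuous: "continuous_on {a_l<..<a_r} (\<lambda>t. Re (c * E (of_real t)))"
      by (intro continuous_intros)
    have nonzero: "Re (c * E (of_real t)) \<noteq> 0" if "a_l < t" "t < a_r" for t
      using assms(11) that unfolding A_alpha_eq of_real_eq_0_iff by blast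
    have "0 < Re (c * E (of_real \<xi>))"
      using phase assms(2) by simp
    then have Re_pos: "0 < Re (c * E (of_real t))" if "a_l < t" "t < a_r" for t
      using pos_on_interval_if_nonzero[OF continuous nonzero assms(7,8)] that by blast
    have "f (of_real \<xi>) \<in> \<real>"
      using assms(4) unfolding real_entire_def by blast
    then have "sup_norm f E * Re (c * E (of_real x)) \<le> cmod (f (of_real x))"
      using sup_norm_mult_Re_le_norm[OF assms(1) assms(2)[rule_format] assms(3) _ assms(5)
            phase Re_pos assms(7,8) 2] by blast
    then show ?thesis by (simp add: A_alpha_eq)
  qed
qed

end
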